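(* Let $M$ be a submanifold of the Euclidean space $\mathbb{E}^m$ with induced metric $g$, position vector field $\mathbf{x}=\mathbf{x}^T+\mathbf{x}^N$ (tangential and normal components), and let $\beta,\gamma,\delta$ be smooth functions on $M$. Then $(M,g,\mathbf{x}^T,\beta,\gamma,\delta)$ is a generalized soliton, i.e. $\frac12\mathcal{L}_{\mathbf{x}^T}g+\beta\,\mathrm{Ric}=\gamma g+\delta\,(\mathbf{x}^T)^\flat\otimes(\mathbf{x}^T)^\flat$, if and only if the Ricci tensor of $M$ satisfies $$\beta\,\mathrm{Ric}(X,Y)=(\gamma-1)g(X,Y)+\delta\,g(\mathbf{x}^T,X)g(\mathbf{x}^T,Y)-g(A_{\mathbf{x}^N}X,Y)$$ for all vector fields $X,Y$ tangent to $M$.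
   Context: $A_\zeta$ denotes the shape operator of $M$ in $\mathbb{E}^m$ with respect to a normal vector field $\zeta$, defined by the Weingarten formula $\widetilde\nabla_X\zeta=-A_\zeta X+D_X\zeta$ ($\widetilde\nabla$ the Euclidean connection, $D$ the normal connection). $(\mathbf{x}^T)^\flat=g(\mathbf{x}^T,\cdot)$. *)

theory Defs
  imports "HOL-Analysis.Analysis"
begin

text \<open>A submanifold M of E^m is described locally by a smooth embedded patch
  phi : U subset R^n -> R^m (U open).  All tensors are expressed by their
  components in the coordinate frame d_i = pd phi i.  Functions on M are pulled
  back to U.\<close>

definition pd :: "(real^'n \<Rightarrow> 'a::real_normed_vector) \<Rightarrow> 'n \<Rightarrow> real^'n \<Rightarrow> 'a" where
  "pd f i u = frechet_derivative f (at u) (axis i 1)"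

fun iter_pd :: "'n list \<Rightarrow> (real^'n \<Rightarrow> 'a::real_normed_vector) \<Rightarrow> real^'n \<Rightarrow> 'a" where
  "iter_pd [] f = f"
| "iter_pd (j # js) f = pd (iter_pd js f) j"

definition Cinf_on :: "(real^'n) set \<Rightarrow> (real^'n \<Rightarrow> 'a::real_normed_vector) \<Rightarrow> bool" where
  "Cinf_on U f \<longleftrightarrow> (\<forall>js. iter_pd js f differentiable_on U)"

definition metric :: "(real^'n \<Rightarrow> real^'m) \<Rightarrow> 'n \<Rightarrow> 'n \<Rightarrow> real^'n \<Rightarrow> real" where
  "metric \<phi> i j u = pd \<phi> i u \<bullet> pd \<phi> j u"

definition ginv :: "(real^'n \<Rightarrow> real^'m) \<Rightarrow> real^'n \<Rightarrow> 'n \<Rightarrow> 'n \<Rightarrow> real" where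
  "ginv \<phi> u k l = matrix_inv (\<chi> i j. metric \<phi> i j u) $ k $ l"

definition chr :: "(real^'n \<Rightarrow> real^'m) \<Rightarrow> 'n \<Rightarrow> 'n \<Rightarrow> 'n \<Rightarrow> real^'n \<Rightarrow> real" where
  "chr \<phi> k i j u = 1/2 * (\<Sum>l\<in>UNIV. ginv \<phi> u k l *
      (pd (metric \<phi> j l) i u + pd (metric \<phi> i l) j u - pd (metric \<phi> i j) l u))"

text \<open>R(d_i,d_j)d_k = sum_l R^l_ijk d_l, with R(X,Y) = nabla_X nabla_Y - nabla_Y nabla_X - nabla_[X,Y].\<close>
definition riem :: "(real^'n \<Rightarrow> real^'m) \<Rightarrow> 'n \<Rightarrow> 'n \<Rightarrow> 'n \<Rightarrow> 'n \<Rightarrow> real^'n \<Rightarrow> real" where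
  "riem \<phi> l i j k u = pd (chr \<phi> l j k) i u - pd (chr \<phi> l i k) j u
     + (\<Sum>p\<in>UNIV. chr \<phi> p j k u * chr \<phi> l i p u - chr \<phi> p i k u * chr \<phi> l j p u)"

definition ric :: "(real^'n \<Rightarrow> real^'m) \<Rightarrow> 'n \<Rightarrow> 'n \<Rightarrow> real^'n \<Rightarrow> real" where
  "ric \<phi> j k u = (\<Sum>i\<in>UNIV. riem \<phi> i i j k u)"

definition tcoef :: "(real^'n \<Rightarrow> real^'m) \<Rightarrow> 'n \<Rightarrow> real^'n \<Rightarrow> real" where
  "tcoef \<phi> i u = (\<Sum>j\<in>UNIV. ginv \<phi> u i j * (\<phi> u \<bullet> pd \<phi> j u))"

definition xT :: "(real^'n \<Rightarrow> real^'m) \<Rightarrow> real^'n \<Rightarrow> real^'m" where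
  "xT \<phi> u = (\<Sum>i\<in>UNIV. tcoef \<phi> i u *\<^sub>R pd \<phi> i u)"

definition xN :: "(real^'n \<Rightarrow> real^'m) \<Rightarrow> real^'n \<Rightarrow> real^'m" where
  "xN \<phi> u = \<phi> u - xT \<phi> u"

definition lie_xT :: "(real^'n \<Rightarrow> real^'m) \<Rightarrow> 'n \<Rightarrow> 'n \<Rightarrow> real^'n \<Rightarrow> real" where
  "lie_xT \<phi> i j u = (\<Sum>k\<in>UNIV. tcoef \<phi> k u * pd (metric \<phi> i j) k u
      + metric \<phi> k j u * pd (tcoef \<phi> k) i u + metric \<phi> i k u * pd (tcoef \<phi> k) j u)"

text \<open>g(A_{x^N} d_i, d_j), where A_xi X = -(tangential part of D~_X xi) (Weingarten).\<close>
definition shape_xN :: "(real^'n \<Rightarrow> real^'m) \<Rightarrow> 'n \<Rightarrow> 'n \<Rightarrow> real^'n \<Rightarrow> real" where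
  "shape_xN \<phi> i j u = - (pd (xN \<phi>) i u \<bullet> pd \<phi> j u)"

end

theory Submission
  imports Defs
begin

text \<open>Write x = x^T + x^N for the position vector and d_i = pd phi i for the coordinate frame.
  Since pd x^T i = d_i - pd x^N i, we get <pd x^T i, d_j> = g_ij + g(A_{x^N} d_i, d_j).
  Differentiating <x^N, d_j> = 0 gives g(A_{x^N} d_i, d_j) = <x^N, pd d_j i>, which is symmetric
  in i and j by Schwarz's theorem; hence (1/2) L_{x^T} g = g + g(A_{x^N} _, _), and the soliton
  equation and the condition on the Ricci tensor are the same linear equation at every point.
  Schwarz's theorem is needed only in Young's form (first partials differentiable at the
  point), which follows from the mean value theorem.\<close>

lemma pd_has_derivative: "(f has_derivative f') (at u) \<Longrightarrow> pd f i u = f' (axis i 1)"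
  by (simp add: pd_def frechet_derivative_at[symmetric])

lemma pd_cong_open:
  assumes "open U" "u \<in> U" "\<And>w. w \<in> U \<Longrightarrow> f w = g w"
  shows "pd f i u = pd g i u"
proof -
  have "(f has_derivative f') (at u) \<longleftrightarrow> (g has_derivative f') (at u)" for f'
    using has_derivative_transform_within_open[OF _ assms(1,2), of f _ UNIV g]
      has_derivative_transform_within_open[OF _ assms(1,2), of g _ UNIV f] assms(3)
    by metis
  then show ?thesis
    unfolding pd_def frechet_derivative_def by simp
qed

lemma differentiable_cong_open:
  assumes "open U" "u \<in> U" "\<And>w. w \<in> U \<Longrightarrow> f w = g w" "f differentiable at u"
  shows "g differentiable at u"
  using assms has_derivative_transform_within_open unfolding differentiable_def by metis

lemma pd_const: "pd (\<lambda>w. c) i u = 0"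
  by (simp add: pd_has_derivative[OF has_derivative_const])

lemma pd_diff:
  assumes "f differentiable at u" "g differentiable at u"
  shows "pd (\<lambda>w. f w - g w) i u = pd f i u - pd g i u"
  using pd_has_derivative[OF has_derivative_diff[OF assms[unfolded frechet_derivative_works]]]
  by (simp add: pd_def)

lemma pd_sum:
  assumes "\<And>k. k \<in> S \<Longrightarrow> f k differentiable at u"
  shows "pd (\<lambda>w. \<Sum>k\<in>S. f k w) i u = (\<Sum>k\<in>S. pd (f k) i u)"
  using pd_has_derivative[OF has_derivative_sum[OF assms[unfolded frechet_derivative_works]]]
  by (simp add: pd_def)

lemma pd_scaleR:
  assumes "c differentiable at u" "f differentiable at u"
  shows "pd (\<lambda>w. c w *\<^sub>R f w) i u = pd c i u *\<^sub>R f u + c u *\<^sub>R pd f i u"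
  using pd_has_derivative[OF has_derivative_scaleR[OF assms[unfolded frechet_derivative_works]]]
  by (simp add: pd_def add.commute)

lemma pd_inner:
  assumes "f differentiable at u" "g differentiable at u"
  shows "pd (\<lambda>w. f w \<bullet> g w) i u = pd f i u \<bullet> g u + f u \<bullet> pd g i u"
  using pd_has_derivative[OF has_derivative_inner[OF assms[unfolded frechet_derivative_works]]]
  by (simp add: pd_def inner_commute add.commute)

lemma differentiable_component:
  assumes "f differentiable at u"
  shows "(\<lambda>w. f w $ k) differentiable at u"
  using bounded_linear.has_derivative[OF bounded_linear_vec_nth assms[unfolded frechet_derivative_works]]
  by (rule differentiableI)

lemma pd_component:
  assumes "f differentiable at u"
  shows "pd (\<lambda>w. f w $ k) i u = pd f i u $ k"
  using pd_has_derivative[OF bounded_linear.has_derivative[OF bounded_linear_vec_nth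
        assms[unfolded frechet_derivative_works]]]
  by (simp add: pd_def)

lemma differentiable_det:
  fixes F :: "'n::finite \<Rightarrow> 'n \<Rightarrow> 'a::real_normed_vector \<Rightarrow> real"
  assumes "\<And>i j. F i j differentiable at u"
  shows "(\<lambda>w. det (\<chi> i j. F i j w)) differentiable at u"
  using assms[unfolded frechet_derivative_works]
  by (auto simp: det_def intro!: differentiable_sum differentiable_mult differentiableI[OF has_derivative_prod])

lemma frechet_derivative_eq_sum_pd:
  assumes "f differentiable at u"
  shows "frechet_derivative f (at u) x = (\<Sum>i\<in>UNIV. x $ i *\<^sub>R pd f i u)"
proof -
  have lin: "linear (frechet_derivative f (at u))"
    using assms frechet_derivative_works has_derivative_linear by blast
  have "frechet_derivative f (at u) x = frechet_derivative f (at u) (\<Sum>i\<in>UNIV. x $ i *\<^sub>R axis i 1)"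
    using basis_expansion[of x] by (simp add: scalar_mult_eq_scaleR)
  then show ?thesis
    by (simp add: linear_sum[OF lin] linear_cmul[OF lin] pd_def)
qed

lemma has_real_derivative_along_axis:
  fixes f :: "real^'n \<Rightarrow> real"
  assumes "f differentiable at (a + s *\<^sub>R axis i 1)"
  shows "((\<lambda>t. f (a + t *\<^sub>R axis i 1)) has_real_derivative pd f i (a + s *\<^sub>R axis i 1)) (at s)"
proof -
  let ?y = "a + s *\<^sub>R axis i 1"
  have D: "(f has_derivative frechet_derivative f (at ?y)) (at ?y)"
    using assms frechet_derivative_works by blast
  have "((\<lambda>t. a + t *\<^sub>R axis i 1) has_derivative (\<lambda>t. t *\<^sub>R axis i 1)) (at s)"
    by (auto intro!: derivative_eq_intros)
  from has_derivative_compose[OF this D]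
  show ?thesis
    unfolding has_field_derivative_def
    by (rule has_derivative_eq_rhs)
      (simp add: fun_eq_iff pd_def linear_cmul[OF has_derivative_linear[OF D]])
qed

lemma second_difference_approx:
  fixes f :: "real^'n \<Rightarrow> real"
  assumes diff: "\<And>y. norm (y - u) < r \<Longrightarrow> f differentiable at y"
    and L: "linear L"
    and approx: "\<And>y. norm (y - u) < r \<Longrightarrow> \<bar>pd f i y - pd f i u - L (y - u)\<bar> \<le> \<epsilon> * norm (y - u)"
    and h: "0 < h" "2 * h < r" and d: "norm d = 1" and \<epsilon>: "0 \<le> \<epsilon>"
  shows "\<bar>f (u + h *\<^sub>R axis i 1 + h *\<^sub>R d) - f (u + h *\<^sub>R axis i 1) - f (u + h *\<^sub>R d) + f u
           - h\<^sup>2 * L d\<bar> \<le> 3 * \<epsilon> * h\<^sup>2"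
proof -
  define e where "e = (axis i 1 :: real^'n)"
  define g where "g s = f (u + h *\<^sub>R d + s *\<^sub>R e) - f (u + s *\<^sub>R e)" for s
  define g' where "g' s = pd f i (u + h *\<^sub>R d + s *\<^sub>R e) - pd f i (u + s *\<^sub>R e)" for s
  have near1: "norm (h *\<^sub>R d + s *\<^sub>R e) \<le> h + s" if "0 \<le> s" for s
    using norm_triangle_ineq[of "h *\<^sub>R d" "s *\<^sub>R e"] that h d by (simp add: e_def)
  have near2: "norm (s *\<^sub>R e) = s" if "0 \<le> s" for s
    using that by (simp add: e_def)
  have "(g has_real_derivative g' s) (at s)" if "0 \<le> s" "s \<le> h" for s
    unfolding g_def g'_def e_def
    using near1[of s, unfolded e_def] that h
    by (intro DERIV_diff has_real_derivative_along_axis diff) (simp_all add: algebra_simps)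
  \<comment> \<open>mean value theorem in direction i, then compare both values of \<open>pd f i\<close> with \<open>L\<close>\<close>
  then obtain z where z: "0 < z" "z < h" "g h - g 0 = h * g' z"
    using MVT2[of 0 h g g'] h by auto
  have approx1: "\<bar>pd f i (u + h *\<^sub>R d + z *\<^sub>R e) - pd f i u - L (h *\<^sub>R d + z *\<^sub>R e)\<bar>
      \<le> \<epsilon> * norm (h *\<^sub>R d + z *\<^sub>R e)"
    using approx[of "u + h *\<^sub>R d + z *\<^sub>R e"] near1[of z] z h by (simp add: add.assoc)
  have approx2: "\<bar>pd f i (u + z *\<^sub>R e) - pd f i u - L (z *\<^sub>R e)\<bar> \<le> \<epsilon> * norm (z *\<^sub>R e)"
    using approx[of "u + z *\<^sub>R e"] near2[of z] z h by simp
  have "\<bar>g' z - h * L d\<bar>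
      = \<bar>(pd f i (u + h *\<^sub>R d + z *\<^sub>R e) - pd f i u - L (h *\<^sub>R d + z *\<^sub>R e))
         - (pd f i (u + z *\<^sub>R e) - pd f i u - L (z *\<^sub>R e))\<bar>"
    unfolding g'_def by (simp add: linear_add[OF L] linear_cmul[OF L] algebra_simps)
  also have "\<dots> \<le> \<epsilon> * norm (h *\<^sub>R d + z *\<^sub>R e) + \<epsilon> * norm (z *\<^sub>R e)"
    by (rule order_trans[OF abs_triangle_ineq4 add_mono[OF approx1 approx2]])
  also have "\<dots> \<le> 3 * \<epsilon> * h"
    using mult_left_mono[OF near1[of z] \<epsilon>] near2[of z] mult_left_mono[of z h \<epsilon>] z \<epsilon>
    by (auto simp: distrib_left mult.assoc)
  finally have "\<bar>g' z - h * L d\<bar> \<le> 3 * \<epsilon> * h" .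
  moreover have "f (u + h *\<^sub>R e + h *\<^sub>R d) - f (u + h *\<^sub>R e) - f (u + h *\<^sub>R d) + f u - h\<^sup>2 * L d
      = h * (g' z - h * L d)"
    using z(3) unfolding g_def by (simp add: power2_eq_square algebra_simps)
  ultimately show ?thesis
    using h by (simp add: abs_mult power2_eq_square e_def)
qed

lemma pd_pd_commute_real:
  fixes f :: "real^'n \<Rightarrow> real"
  assumes U: "open U" "u \<in> U" and diff: "\<And>y. y \<in> U \<Longrightarrow> f differentiable at y"
    and "pd f i differentiable at u" "pd f j differentiable at u"
  shows "pd (pd f i) j u = pd (pd f j) i u"
proof -
  define Li where "Li = frechet_derivative (pd f i) (at u)"
  define Lj where "Lj = frechet_derivative (pd f j) (at u)"
  have Di: "(pd f i has_derivative Li) (at u)" and Dj: "(pd f j has_derivative Lj) (at u)"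
    using assms(4,5) frechet_derivative_works Li_def Lj_def by blast+
  obtain r0 where r0: "r0 > 0" "ball u r0 \<subseteq> U"
    using U open_contains_ball by blast
  have close: "\<bar>Li (axis j 1) - Lj (axis i 1)\<bar> \<le> 6 * \<epsilon>" if \<epsilon>: "\<epsilon> > 0" for \<epsilon>
  proof -
    obtain ri where ri: "ri > 0"
      "\<And>y. norm (y - u) < ri \<Longrightarrow> \<bar>pd f i y - pd f i u - Li (y - u)\<bar> \<le> \<epsilon> * norm (y - u)"
      using Di \<epsilon> unfolding has_derivative_at_alt real_norm_def by blast
    obtain rj where rj: "rj > 0"
      "\<And>y. norm (y - u) < rj \<Longrightarrow> \<bar>pd f j y - pd f j u - Lj (y - u)\<bar> \<le> \<epsilon> * norm (y - u)"
      using Dj \<epsilon> unfolding has_derivative_at_alt real_norm_def by blast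
    define r where "r = min r0 (min ri rj)"
    define h where "h = r / 4"
    have h: "0 < h" "2 * h < r"
      using r0 ri rj by (auto simp: r_def h_def)
    have diff_near: "f differentiable at y" if "norm (y - u) < r" for y
      using that r0 diff by (auto simp: r_def dist_norm norm_minus_commute)
    \<comment> \<open>both linearisations approximate the same second difference up to \<open>3 \<epsilon> h\<^sup>2\<close>\<close>
    define \<Delta> where "\<Delta> = f (u + h *\<^sub>R axis i 1 + h *\<^sub>R axis j 1) - f (u + h *\<^sub>R axis i 1)
      - f (u + h *\<^sub>R axis j 1) + f u"
    have "\<bar>\<Delta> - h\<^sup>2 * Li (axis j 1)\<bar> \<le> 3 * \<epsilon> * h\<^sup>2"
      unfolding \<Delta>_def
      by (rule second_difference_approx[OF diff_near has_derivative_linear[OF Di] _ h])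
        (use ri r_def \<epsilon> in auto)
    moreover have "\<bar>\<Delta> - h\<^sup>2 * Lj (axis i 1)\<bar> \<le> 3 * \<epsilon> * h\<^sup>2"
    proof -
      have swap: "u + h *\<^sub>R axis j 1 + h *\<^sub>R axis i 1 = u + h *\<^sub>R axis i 1 + h *\<^sub>R axis j 1"
        by (simp add: algebra_simps)
      have "\<bar>f (u + h *\<^sub>R axis j 1 + h *\<^sub>R axis i 1) - f (u + h *\<^sub>R axis j 1) - f (u + h *\<^sub>R axis i 1)
          + f u - h\<^sup>2 * Lj (axis i 1)\<bar> \<le> 3 * \<epsilon> * h\<^sup>2"
        by (rule second_difference_approx[OF diff_near has_derivative_linear[OF Dj] _ h])
          (use rj r_def \<epsilon> in auto)
      from this[unfolded swap] show ?thesis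
        unfolding \<Delta>_def by linarith
    qed
    ultimately have "h\<^sup>2 * \<bar>Li (axis j 1) - Lj (axis i 1)\<bar> \<le> h\<^sup>2 * (6 * \<epsilon>)"
      unfolding abs_mult[of "h\<^sup>2", simplified, symmetric] by (simp add: algebra_simps abs_le_iff)
    then show ?thesis
      using h by simp
  qed
  have "Li (axis j 1) = Lj (axis i 1)"
    using field_le_epsilon[of "\<bar>Li (axis j 1) - Lj (axis i 1)\<bar>" 0] close[of "_ / 6"] by simp
  then show ?thesis
    by (simp add: pd_def Li_def Lj_def)
qed

lemma pd_pd_commute:
  fixes f :: "real^'n \<Rightarrow> real^'m"
  assumes U: "open U" "u \<in> U" and diff: "\<And>y. y \<in> U \<Longrightarrow> f differentiable at y"
    and di: "\<And>y. y \<in> U \<Longrightarrow> pd f i differentiable at y"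
    and dj: "\<And>y. y \<in> U \<Longrightarrow> pd f j differentiable at y"
  shows "pd (pd f i) j u = pd (pd f j) i u"
proof (rule vec_eq_iff[THEN iffD2], intro allI)
  fix k
  define fk where "fk w = f w $ k" for w
  have pd_fk: "pd fk l w = pd f l w $ k" if "w \<in> U" for l w
    unfolding fk_def using pd_component[OF diff[OF that]] by simp
  have "pd (pd f i) j u $ k = pd (pd fk i) j u"
    using pd_component[OF di[OF U(2)]] pd_cong_open[OF U pd_fk] by simp
  also have "\<dots> = pd (pd fk j) i u"
  proof (rule pd_pd_commute_real[OF U])
    show "fk differentiable at y" if "y \<in> U" for y
      unfolding fk_def using differentiable_component[OF diff[OF that]] .
    have "pd fk l differentiable at u" if "pd f l differentiable at u" for l
      by (rule differentiable_cong_open[OF U _ differentiable_component[OF that]]) (simp add: pd_fk)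
    then show "pd fk i differentiable at u" "pd fk j differentiable at u"
      using di dj U by blast+
  qed
  also have "\<dots> = pd (pd f j) i u $ k"
    using pd_component[OF dj[OF U(2)]] pd_cong_open[OF U pd_fk] by simp
  finally show "pd (pd f i) j u $ k = pd (pd f j) i u $ k" .
qed

lemma invertible_iff_inj:
  fixes A :: "real^'n^'n"
  shows "invertible A \<longleftrightarrow> inj ((*v) A)"
  using invertible_left_inverse matrix_left_invertible_injective by blast

lemma matrix_inv_right: "invertible A \<Longrightarrow> A ** matrix_inv A = mat 1"
  unfolding invertible_def matrix_inv_def by (rule someI2_ex) auto

lemma metric_commute: "metric \<phi> i j u = metric \<phi> j i u"
  by (simp add: metric_def inner_commute)

lemma pd_metric:
  assumes "pd \<phi> i differentiable at u" "pd \<phi> j differentiable at u"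
  shows "pd (metric \<phi> i j) k u = pd (pd \<phi> i) k u \<bullet> pd \<phi> j u + pd \<phi> i u \<bullet> pd (pd \<phi> j) k u"
  using pd_inner[OF assms] by (simp add: metric_def[abs_def])

lemma inner_metric_matrix:
  assumes "\<phi> differentiable at u"
  shows "x \<bullet> ((\<chi> i j. metric \<phi> i j u) *v x)
    = frechet_derivative \<phi> (at u) x \<bullet> frechet_derivative \<phi> (at u) x"
  unfolding frechet_derivative_eq_sum_pd[OF assms] inner_sum_left inner_sum_right
  by (simp add: matrix_vector_mult_def inner_vec_def metric_def sum_distrib_left
      mult.commute mult.left_commute)

lemma invertible_metric_matrix:
  assumes "\<phi> differentiable at u" and inj: "inj (frechet_derivative \<phi> (at u))"
  shows "invertible (\<chi> i j. metric \<phi> i j u)"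
  unfolding invertible_iff_inj
proof (rule linear_injective_0[THEN iffD2, OF matrix_vector_mul_linear], intro allI impI)
  have lin: "linear (frechet_derivative \<phi> (at u))"
    using assms(1) frechet_derivative_works has_derivative_linear by blast
  fix x assume "(\<chi> i j. metric \<phi> i j u) *v x = 0"
  then have "frechet_derivative \<phi> (at u) x = frechet_derivative \<phi> (at u) 0"
    using inner_metric_matrix[OF assms(1), of x] linear_0[OF lin] by simp
  then show "x = 0"
    using inj injD by metis
qed

lemma Cinf_on_differentiable:
  "open U \<Longrightarrow> Cinf_on U f \<Longrightarrow> u \<in> U \<Longrightarrow> iter_pd js f differentiable at u"
  unfolding Cinf_on_def using differentiable_on_eq_differentiable_at by blast

locale immersed_patch =
  fixes \<phi> :: "real^'n \<Rightarrow> real^'m" and U :: "(real^'n) set"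
  assumes open_domain: "open U"
    and differentiable: "u \<in> U \<Longrightarrow> \<phi> differentiable at u"
    and pd_differentiable: "u \<in> U \<Longrightarrow> pd \<phi> i differentiable at u"
    and injective_derivative: "u \<in> U \<Longrightarrow> inj (frechet_derivative \<phi> (at u))"
begin

lemma pd_pd_sym: "u \<in> U \<Longrightarrow> pd (pd \<phi> i) j u = pd (pd \<phi> j) i u"
  using pd_pd_commute[OF open_domain _ differentiable pd_differentiable pd_differentiable] .

lemma invertible_metric_matrix_at: "u \<in> U \<Longrightarrow> invertible (\<chi> i j. metric \<phi> i j u)"
  by (rule invertible_metric_matrix[OF differentiable injective_derivative])

lemma metric_matrix_tcoef:
  assumes "u \<in> U"
  shows "(\<chi> i j. metric \<phi> i j u) *v (\<chi> k. tcoef \<phi> k u) = (\<chi> j. \<phi> u \<bullet> pd \<phi> j u)"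
proof -
  let ?G = "\<chi> i j. metric \<phi> i j u"
  have "(\<chi> k. tcoef \<phi> k u) = matrix_inv ?G *v (\<chi> j. \<phi> u \<bullet> pd \<phi> j u)"
    by (simp add: vec_eq_iff tcoef_def ginv_def matrix_vector_mult_def)
  then show ?thesis
    using matrix_inv_right[OF invertible_metric_matrix_at[OF assms]]
    by (simp add: matrix_vector_mul_assoc)
qed

lemma tcoef_cramer:
  assumes "u \<in> U"
  shows "tcoef \<phi> k u = det (\<chi> i j. if j = k then \<phi> u \<bullet> pd \<phi> i u else metric \<phi> i j u)
    / det (\<chi> i j. metric \<phi> i j u)"
proof -
  have "(\<chi> k. tcoef \<phi> k u) = (\<chi> k. det (\<chi> i j. if j = k then \<phi> u \<bullet> pd \<phi> i u else metric \<phi> i j u)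
    / det (\<chi> i j. metric \<phi> i j u))"
    using cramer[OF invertible_metric_matrix_at[OF assms, unfolded invertible_det_nz]]
      metric_matrix_tcoef[OF assms] by (simp cong: if_cong)
  then show ?thesis
    by (simp add: vec_eq_iff)
qed

lemma differentiable_tcoef:
  assumes "u \<in> U"
  shows "tcoef \<phi> k differentiable at u"
proof (rule differentiable_cong_open[OF open_domain assms])
  have "(\<lambda>w. if j = k then \<phi> w \<bullet> pd \<phi> i w else metric \<phi> i j w) differentiable at u" for i j
    using assms by (cases "j = k") (auto simp: metric_def[abs_def] differentiable pd_differentiable)
  then show "(\<lambda>w. det (\<chi> i j. if j = k then \<phi> w \<bullet> pd \<phi> i w else metric \<phi> i j w)
      / det (\<chi> i j. metric \<phi> i j w)) differentiable at u"
    using assms pd_differentiable invertible_metric_matrix_at[OF assms]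
    by (auto simp: metric_def[abs_def] invertible_det_nz intro!: differentiable_divide differentiable_det)
qed (simp add: tcoef_cramer)

lemma differentiable_xT: "u \<in> U \<Longrightarrow> xT \<phi> differentiable at u"
  unfolding xT_def[abs_def] by (simp add: differentiable_tcoef pd_differentiable)

lemma differentiable_xN: "u \<in> U \<Longrightarrow> xN \<phi> differentiable at u"
  unfolding xN_def[abs_def] by (simp add: differentiable differentiable_xT)

lemma xT_inner_pd:
  assumes "u \<in> U"
  shows "xT \<phi> u \<bullet> pd \<phi> j u = \<phi> u \<bullet> pd \<phi> j u"
proof -
  have "xT \<phi> u \<bullet> pd \<phi> j u = ((\<chi> i j. metric \<phi> i j u) *v (\<chi> k. tcoef \<phi> k u)) $ j"
    unfolding xT_def inner_sum_left matrix_vector_mult_def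
    by (simp add: metric_def inner_commute mult.commute)
  then show ?thesis
    by (simp add: metric_matrix_tcoef[OF assms])
qed

lemma xN_inner_pd: "u \<in> U \<Longrightarrow> xN \<phi> u \<bullet> pd \<phi> j u = 0"
  by (simp add: xN_def inner_diff_left xT_inner_pd)

lemma shape_xN_eq:
  assumes "u \<in> U"
  shows "shape_xN \<phi> i j u = xN \<phi> u \<bullet> pd (pd \<phi> j) i u"
proof -
  have "pd (\<lambda>w. xN \<phi> w \<bullet> pd \<phi> j w) i u = pd (\<lambda>w. 0) i u"
    by (rule pd_cong_open[OF open_domain assms]) (simp add: xN_inner_pd)
  then show ?thesis
    using pd_inner[OF differentiable_xN pd_differentiable, OF assms assms]
    by (simp add: shape_xN_def pd_const)
qed

lemma shape_xN_commute: "u \<in> U \<Longrightarrow> shape_xN \<phi> i j u = shape_xN \<phi> j i u"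
  by (simp add: shape_xN_eq pd_pd_sym)

lemma pd_xT_inner_pd:
  assumes "u \<in> U"
  shows "pd (xT \<phi>) i u \<bullet> pd \<phi> j u = metric \<phi> i j u + shape_xN \<phi> i j u"
proof -
  have "pd (xN \<phi>) i u = pd \<phi> i u - pd (xT \<phi>) i u"
    using pd_diff[OF differentiable differentiable_xT, OF assms assms]
    by (simp add: xN_def[abs_def])
  then show ?thesis
    by (simp add: shape_xN_def inner_diff_left metric_def)
qed

lemma lie_xT_eq:
  assumes "u \<in> U"
  shows "lie_xT \<phi> i j u = pd (xT \<phi>) i u \<bullet> pd \<phi> j u + pd (xT \<phi>) j u \<bullet> pd \<phi> i u"
proof -
  have pd_xT: "pd (xT \<phi>) i u \<bullet> pd \<phi> j u = (\<Sum>k\<in>UNIV. pd (tcoef \<phi> k) i u * metric \<phi> k j u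
      + tcoef \<phi> k u * (pd (pd \<phi> k) i u \<bullet> pd \<phi> j u))" for i j
    using assms unfolding xT_def[abs_def]
    by (simp add: pd_sum pd_scaleR differentiable_tcoef pd_differentiable inner_sum_left
        inner_add_left metric_def)
  have "pd (metric \<phi> i j) k u = pd (pd \<phi> k) i u \<bullet> pd \<phi> j u + pd (pd \<phi> k) j u \<bullet> pd \<phi> i u" for k
    using pd_metric[OF pd_differentiable pd_differentiable, OF assms assms] pd_pd_sym[OF assms]
    by (simp add: inner_commute)
  then show ?thesis
    unfolding pd_xT lie_xT_def sum.distrib[symmetric]
    by (intro sum.cong) (simp_all add: metric_commute[of \<phi> i] algebra_simps)
qed

lemma half_lie_xT: "u \<in> U \<Longrightarrow> lie_xT \<phi> i j u / 2 = metric \<phi> i j u + shape_xN \<phi> i j u"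
  by (simp add: lie_xT_eq pd_xT_inner_pd metric_commute[of \<phi> j] shape_xN_commute[of _ j])

end

theorem theorem5p2:
  fixes \<phi> :: "real^'n \<Rightarrow> real^'m" and U :: "(real^'n) set"
    and \<beta> \<gamma> \<delta> :: "real^'n \<Rightarrow> real"
  assumes "open U" and "Cinf_on U \<phi>" and "inj_on \<phi> U"
    and "\<forall>u\<in>U. inj (frechet_derivative \<phi> (at u))"
    and "Cinf_on U \<beta>" and "Cinf_on U \<gamma>" and "Cinf_on U \<delta>"
  shows "(\<forall>u\<in>U. \<forall>i j. lie_xT \<phi> i j u / 2 + \<beta> u * ric \<phi> i j u
             = \<gamma> u * metric \<phi> i j u + \<delta> u * (xT \<phi> u \<bullet> pd \<phi> i u) * (xT \<phi> u \<bullet> pd \<phi> j u))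
     \<longleftrightarrow> (\<forall>u\<in>U. \<forall>i j. \<beta> u * ric \<phi> i j u
             = (\<gamma> u - 1) * metric \<phi> i j u + \<delta> u * (xT \<phi> u \<bullet> pd \<phi> i u) * (xT \<phi> u \<bullet> pd \<phi> j u)
               - shape_xN \<phi> i j u)"
proof -
  interpret immersed_patch \<phi> U
    using Cinf_on_differentiable[OF assms(1,2), of _ "[]"]
      Cinf_on_differentiable[OF assms(1,2), of _ "[i]" for i] assms(1,4)
    by unfold_locales auto
  show ?thesis
    by (simp add: half_lie_xT left_diff_distrib cong: ball_cong) (auto simp: algebra_simps)
qed

end
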